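(* Let $\epsilon>0$. Consider mechanisms $Q:\mathbb{R}\to\Delta(\mathbb{R})$ of the form $Qu=u+V$, where the noise $V$ is a real random variable with probability distribution $g\in\Delta(\mathbb{R})$ that does not depend on the input $u$, and suppose $Q$ is $\epsilon$-Lipschitz private with respect to the metric $|u-u'|$ on $\mathbb{R}$. Then $$\mathbb{E}\big(Qu-u\big)^2=\mathbb{E}_{V\sim g}V^2\;\ge\;\mathbb{E}_{V\sim l}V^2=\frac{2}{\epsilon^2},$$ where $l(v)=\frac{\epsilon}{2}e^{-\epsilon|v|}$ is the Laplace density; i.e. the Laplace mechanism (adding noise with density $l$), which is itself $\epsilon$-Lipschitz private, achieves the minimal mean-squared error for approximating the identity query $q(u)=u$ among all such mechanisms.
   Context: $\Delta(\mathcal{Y})$ denotes the set of probability measures on $\mathcal{Y}$ (with its Borel $\sigma$-algebra). For a normed/metric space $(\mathcal{U},\|\cdot\|)$ and a response set $\mathcal{Y}$, a mechanism $Q:\mathcal{U}\to\Delta(\mathcal{Y})$ is called $\epsilon$-Lipschitz (differentially) private if for all $u,u'\in\mathcal{U}$ and all measurable $\mathcal{S}\subseteq\mathcal{Y}$, $|\ln\mathbb{P}(Qu\in\mathcal{S})-\ln\mathbb{P}(Qu'\in\mathcal{S})|\le\epsilon\|u-u'\|$, equivalently $\mathbb{P}(Qu\in\mathcal{S})\le e^{\epsilon\|u-u'\|}\mathbb{P}(Qu'\in\mathcal{S})$ for all such $u,u',\mathcal{S}$. *)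

theory Defs
  imports "HOL-Probability.Probability"
begin

definition lipschitz_private ::
  "real \<Rightarrow> ('a::metric_space \<Rightarrow> 'b::topological_space measure) \<Rightarrow> bool" where
  "lipschitz_private eps Q \<longleftrightarrow>
     (\<forall>u u' S. S \<in> sets borel \<longrightarrow>
        measure (Q u) S \<le> exp (eps * dist u u') * measure (Q u') S)"

definition additive_mech :: "real measure \<Rightarrow> real \<Rightarrow> real measure" where
  "additive_mech g u = distr g borel (\<lambda>v. u + v)"

definition laplace :: "real \<Rightarrow> real measure" where
  "laplace eps = density lborel (\<lambda>v. ennreal (eps / 2 * exp (- eps * \<bar>v\<bar>)))"

end

theory Submission imports Defs begin

text \<open>Applying privacy to the half-lines \<open>[0,\<infinity>)\<close> and \<open>(-\<infinity>,0]\<close>, shifted by \<open>\<plusminus>s\<close>, gives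
  the tail bound \<open>P(|V| \<ge> s) \<ge> exp (-eps s)\<close> for any private additive noise \<open>V\<close>; Laplace noise
  attains it with equality. By the layer-cake formula \<open>E V\<^sup>2 = \<integral>\<^sub>0\<^sup>\<infinity> 2 s P(|V| \<ge> s) ds\<close> this
  yields \<open>E V\<^sup>2 \<ge> \<integral>\<^sub>0\<^sup>\<infinity> 2 s exp (-eps s) ds = 2 / eps\<^sup>2\<close>. The Laplace density is the
  symmetrisation of the exponential one, so its moments are those of the exponential law.\<close>

definition laplace_density :: "real \<Rightarrow> real \<Rightarrow> real" where
  "laplace_density eps v = eps / 2 * exp (- eps * \<bar>v\<bar>)"

lemma borel_measurable_laplace_density[measurable]: "laplace_density eps \<in> borel_measurable borel"
  unfolding laplace_density_def by measurable

lemma laplace_eq_density: "laplace eps = density lborel (\<lambda>v. ennreal (laplace_density eps v))"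
  by (simp add: laplace_def laplace_density_def)

lemma laplace_density_shift_le:
  assumes "eps > 0"
  shows "laplace_density eps (a + v) \<le> exp (eps * \<bar>a\<bar>) * laplace_density eps v"
proof -
  have "- eps * \<bar>a + v\<bar> \<le> eps * \<bar>a\<bar> + - eps * \<bar>v\<bar>"
    using assms mult_left_mono[of "\<bar>v\<bar>" "\<bar>a + v\<bar> + \<bar>a\<bar>" eps] by (simp add: algebra_simps)
  then have "exp (- eps * \<bar>a + v\<bar>) \<le> exp (eps * \<bar>a\<bar>) * exp (- eps * \<bar>v\<bar>)"
    by (simp flip: exp_add)
  then show ?thesis
    using assms by (simp add: laplace_density_def mult_left_mono)
qed

text \<open>At \<open>v = 0\<close> both exponential terms equal \<open>eps\<close>, twice the Laplace density.\<close>
lemma laplace_density_eq_exponential_density: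
  "v \<noteq> 0 \<Longrightarrow> laplace_density eps v = exponential_density eps v / 2 + exponential_density eps (- v) / 2"
  by (auto simp: laplace_density_def exponential_density_def)

lemma nn_integral_laplace_even:
  assumes eps: "eps > 0" and [measurable]: "f \<in> borel_measurable borel" and even: "\<And>v. f (- v) = f v"
  shows "(\<integral>\<^sup>+ v. f v \<partial>laplace eps) = (\<integral>\<^sup>+ v. ennreal (exponential_density eps v) * f v \<partial>lborel)"
    (is "_ = ?I")
proof -
  let ?e = "\<lambda>v. ennreal (exponential_density eps v) / 2"
  have "AE v in lborel. ennreal (laplace_density eps v) = ?e v + ?e (- v)"
    using AE_lborel_singleton[of 0]
    by eventually_elim
      (simp add: laplace_density_eq_exponential_density exponential_density_nonneg eps
        ennreal_divide_numeral)
  then have "(\<integral>\<^sup>+ v. f v \<partial>laplace eps) = (\<integral>\<^sup>+ v. ?e v * f v + ?e (- v) * f v \<partial>lborel)"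
    unfolding laplace_eq_density
    by (subst nn_integral_density) (auto intro!: nn_integral_cong_AE simp: distrib_right)
  also have "\<dots> = (\<integral>\<^sup>+ v. ?e v * f v \<partial>lborel) + (\<integral>\<^sup>+ v. ?e (- v) * f (- v) \<partial>lborel)"
    by (simp add: nn_integral_add even)
  also have "(\<integral>\<^sup>+ v. ?e (- v) * f (- v) \<partial>lborel) = (\<integral>\<^sup>+ v. ?e v * f v \<partial>lborel)"
    using nn_integral_real_affine[of "\<lambda>v. ?e v * f v" "-1" 0] by simp
  also have "(\<integral>\<^sup>+ v. ?e v * f v \<partial>lborel) = ?I / 2"
    using nn_integral_divide[of "\<lambda>v. ennreal (exponential_density eps v) * f v" lborel 2]
    by (simp add: ennreal_times_divide mult.commute)
  finally show ?thesis
    by (simp add: ennreal_divide_times flip: add_divide_distrib_ennreal mult_2_right)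
qed

lemma prob_space_laplace:
  assumes eps: "eps > 0"
  shows "prob_space (laplace eps)"
proof
  have "emeasure (laplace eps) (space (laplace eps))
      = (\<integral>\<^sup>+ v. ennreal (exponential_density eps v * v ^ 0) \<partial>lborel)"
    using nn_integral_laplace_even[OF eps, of "\<lambda>_. 1"] by simp
  also have "\<dots> = 1"
    using nn_integral_erlang_ith_moment[OF eps, of 0 0] by simp
  finally show "emeasure (laplace eps) (space (laplace eps)) = 1" .
qed

lemma nn_integral_laplace_square:
  assumes eps: "eps > 0"
  shows "(\<integral>\<^sup>+ v. ennreal (v\<^sup>2) \<partial>laplace eps) = ennreal (2 / eps\<^sup>2)"
proof -
  have "(\<integral>\<^sup>+ v. ennreal (v\<^sup>2) \<partial>laplace eps)
      = (\<integral>\<^sup>+ v. ennreal (exponential_density eps v * v ^ 2) \<partial>lborel)"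
    by (simp add: nn_integral_laplace_even[OF eps] exponential_density_nonneg[OF eps] ennreal_mult)
  also have "\<dots> = ennreal (2 / eps\<^sup>2)"
    using nn_integral_erlang_ith_moment[OF eps, of 0 2] by simp
  finally show ?thesis .
qed

lemma lipschitz_private_additive_mech_iff:
  assumes g_sets: "sets g = sets borel"
  shows "lipschitz_private eps (additive_mech g) \<longleftrightarrow>
    (\<forall>u u' S. S \<in> sets borel \<longrightarrow>
       measure g {v. u + v \<in> S} \<le> exp (eps * dist u u') * measure g {v. u' + v \<in> S})"
proof -
  have "measure (additive_mech g w) S = measure g {v. w + v \<in> S}" if "S \<in> sets borel" for w S
  proof -
    have "(\<lambda>v. w + v) \<in> measurable g borel"
      using g_sets by (simp cong: measurable_cong_sets)
    then show ?thesis
      unfolding additive_mech_def using sets_eq_imp_space_eq[OF g_sets] that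
      by (simp add: measure_distr vimage_def)
  qed
  then show ?thesis
    unfolding lipschitz_private_def by auto
qed

lemma lipschitz_private_additive_density:
  fixes h :: "real \<Rightarrow> real"
  assumes [measurable]: "h \<in> borel_measurable borel" and h_nonneg: "\<And>v. 0 \<le> h v"
    and prob: "prob_space (density lborel h)"
    and shift: "\<And>a v. h (a + v) \<le> exp (eps * \<bar>a\<bar>) * h v"
  shows "lipschitz_private eps (additive_mech (density lborel h))"
  unfolding lipschitz_private_additive_mech_iff[OF sets_density[where M = lborel, unfolded sets_lborel]]
proof (intro allI impI)
  fix u u' :: real and S :: "real set"
  assume [measurable]: "S \<in> sets borel"
  interpret D: prob_space "density lborel h" by (rule prob)
  let ?c = "exp (eps * dist u u')"
  have emeasure_shift: "emeasure (density lborel h) {v. w + v \<in> S}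
      = (\<integral>\<^sup>+ v. ennreal (h v) * indicator S (w + v) \<partial>lborel)" for w
    by (subst emeasure_density) (auto intro!: nn_integral_cong split: split_indicator)
  have "(\<integral>\<^sup>+ v. ennreal (h v) * indicator S (u + v) \<partial>lborel)
      = (\<integral>\<^sup>+ v. ennreal (h ((u' - u) + v)) * indicator S (u' + v) \<partial>lborel)"
    using nn_integral_real_affine[of "\<lambda>v. ennreal (h v) * indicator S (u + v)" 1 "u' - u"]
    by simp
  also have "\<dots> \<le> (\<integral>\<^sup>+ v. ennreal ?c * (ennreal (h v) * indicator S (u' + v)) \<partial>lborel)"
  proof (intro nn_integral_mono)
    fix v
    have "ennreal (h ((u' - u) + v)) \<le> ennreal ?c * ennreal (h v)"
      using shift[of "u' - u" v] h_nonneg[of v]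
      by (simp add: dist_real_def abs_minus_commute ennreal_leI flip: ennreal_mult)
    then show "ennreal (h ((u' - u) + v)) * indicator S (u' + v)
        \<le> ennreal ?c * (ennreal (h v) * indicator S (u' + v))"
      by (auto split: split_indicator simp: mult.assoc)
  qed
  also have "\<dots> = ennreal ?c * (\<integral>\<^sup>+ v. ennreal (h v) * indicator S (u' + v) \<partial>lborel)"
    by (rule nn_integral_cmult) auto
  finally have "ennreal (measure (density lborel h) {v. u + v \<in> S})
      \<le> ennreal (?c * measure (density lborel h) {v. u' + v \<in> S})"
    by (simp add: D.emeasure_eq_measure[symmetric] emeasure_shift ennreal_mult)
  then show "measure (density lborel h) {v. u + v \<in> S}
      \<le> ?c * measure (density lborel h) {v. u' + v \<in> S}"
    by (simp add: ennreal_le_iff)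
qed

lemma lipschitz_private_laplace:
  assumes "eps > 0"
  shows "lipschitz_private eps (additive_mech (laplace eps))"
  unfolding laplace_eq_density
proof (rule lipschitz_private_additive_density)
  show "prob_space (density lborel (laplace_density eps))"
    using prob_space_laplace[OF assms] by (simp add: laplace_eq_density)
qed (use assms laplace_density_shift_le in \<open>auto simp: laplace_density_def\<close>)

lemma lipschitz_private_additive_tail_ge:
  assumes g_prob: "prob_space g" and g_sets: "sets g = sets borel"
    and priv: "lipschitz_private eps (additive_mech g)" and s: "s > 0"
  shows "exp (- eps * s) \<le> measure g {v. s \<le> \<bar>v\<bar>}"
proof -
  interpret prob_space g by (rule g_prob)
  have shift: "measure g {v. u + v \<in> S} \<le> exp (eps * dist u u') * measure g {v. u' + v \<in> S}"
    if "S \<in> sets borel" for u u' S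
    using priv that unfolding lipschitz_private_additive_mech_iff[OF g_sets] by blast
  have right: "measure g {v. 0 \<le> v} \<le> exp (eps * s) * measure g {v. s \<le> v}"
    using shift[of "{0..}" 0 "- s"] s by (simp add: dist_real_def)
  have left: "measure g {v. v \<le> 0} \<le> exp (eps * s) * measure g {v. v \<le> - s}"
    using shift[of "{..0}" 0 s] s by (simp add: dist_real_def add.commute flip: le_diff_eq)
  have "{v. 0 \<le> v} \<union> {v. v \<le> 0} = space g"
    using sets_eq_imp_space_eq[OF g_sets] by auto
  then have "1 \<le> measure g ({v. 0 \<le> v} \<union> {v. v \<le> 0})"
    by (simp only: prob_space order_refl)
  also have "\<dots> \<le> measure g {v. 0 \<le> v} + measure g {v. v \<le> 0}"
    using g_sets by (intro measure_Un_le) auto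
  also have "\<dots> \<le> exp (eps * s) * (measure g {v. s \<le> v} + measure g {v. v \<le> - s})"
    using left right by (simp add: distrib_left)
  also have "measure g {v. s \<le> v} + measure g {v. v \<le> - s} = measure g {v. s \<le> \<bar>v\<bar>}"
    using g_sets s by (subst finite_measure_Union[symmetric]) (auto intro!: arg_cong[where f = "measure g"])
  finally show ?thesis
    by (simp add: exp_minus field_simps)
qed

lemma nn_integral_two_mult_indicator_Icc:
  assumes "0 \<le> a"
  shows "(\<integral>\<^sup>+ s. ennreal (2 * s) * indicator {0..a} s \<partial>lborel) = ennreal (a\<^sup>2)"
proof -
  have integral: "has_bochner_integral lborel (\<lambda>s. 2 * s * indicator {0..a} s) (a\<^sup>2 - 0\<^sup>2)"
    using assms by (intro has_bochner_integral_FTC_Icc_real) (auto intro!: derivative_eq_intros)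
  have "(\<integral>\<^sup>+ s. ennreal (2 * s) * indicator {0..a} s \<partial>lborel)
      = (\<integral>\<^sup>+ s. ennreal (2 * s * indicator {0..a} s) \<partial>lborel)"
    by (intro nn_integral_cong) (simp split: split_indicator)
  also have "\<dots> = ennreal (a\<^sup>2)"
    using integral
    by (subst nn_integral_eq_integral) (auto simp: has_bochner_integral_iff split: split_indicator)
  finally show ?thesis .
qed

lemma nn_integral_square_eq_tail:
  fixes M :: "real measure"
  assumes "sigma_finite_measure M" and M_sets: "sets M = sets borel"
  shows "(\<integral>\<^sup>+ v. ennreal (v\<^sup>2) \<partial>M)
    = (\<integral>\<^sup>+ s. ennreal (2 * s) * indicator {0..} s * emeasure M {v. s \<le> \<bar>v\<bar>} \<partial>lborel)"
proof -
  interpret pair_sigma_finite M lborel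
    by (intro pair_sigma_finite.intro assms lborel.sigma_finite_measure_axioms)
  define f where "f v s = ennreal (2 * s) * indicator {0..} s * indicator {v. s \<le> \<bar>v\<bar>} v"
    for v s :: real
  have "case_prod f \<in> borel_measurable (borel \<Otimes>\<^sub>M borel)"
    unfolding f_def by measurable
  then have f_measurable: "case_prod f \<in> borel_measurable (M \<Otimes>\<^sub>M lborel)"
    by (subst measurable_cong_sets[OF sets_pair_measure_cong[OF M_sets sets_lborel] refl])
  have "f v s = ennreal (2 * s) * indicator {0..\<bar>v\<bar>} s" for v s
    by (simp add: f_def split: split_indicator)
  then have "(\<integral>\<^sup>+ v. ennreal (v\<^sup>2) \<partial>M) = (\<integral>\<^sup>+ v. (\<integral>\<^sup>+ s. f v s \<partial>lborel) \<partial>M)"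
    by (simp add: nn_integral_two_mult_indicator_Icc)
  also have "\<dots> = (\<integral>\<^sup>+ s. (\<integral>\<^sup>+ v. f v s \<partial>M) \<partial>lborel)"
    using Fubini'[OF f_measurable] by simp
  also have "\<dots> = (\<integral>\<^sup>+ s. ennreal (2 * s) * indicator {0..} s * emeasure M {v. s \<le> \<bar>v\<bar>} \<partial>lborel)"
    using M_sets by (intro nn_integral_cong) (simp add: f_def nn_integral_cmult_indicator)
  finally show ?thesis .
qed

lemma lipschitz_private_additive_square_ge:
  assumes eps: "eps > 0" and g_prob: "prob_space g" and g_sets: "sets g = sets borel"
    and priv: "lipschitz_private eps (additive_mech g)"
  shows "ennreal (2 / eps\<^sup>2) \<le> (\<integral>\<^sup>+ v. ennreal (v\<^sup>2) \<partial>g)"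
proof -
  interpret prob_space g by (rule g_prob)
  have "ennreal (2 / eps\<^sup>2)
      = ennreal (2 / eps) * (\<integral>\<^sup>+ s. ennreal (exponential_density eps s * s ^ 1) \<partial>lborel)"
    using eps nn_integral_erlang_ith_moment[OF eps, of 0 1]
    by (simp add: power2_eq_square flip: ennreal_mult)
  also have "\<dots> = (\<integral>\<^sup>+ s. ennreal (2 * s) * indicator {0..} s * ennreal (exp (- eps * s)) \<partial>lborel)"
  proof -
    have "ennreal (2 / eps) * ennreal (exponential_density eps s * s ^ 1)
        = ennreal (2 * s) * indicator {0..} s * ennreal (exp (- eps * s))" for s
    proof (cases "0 \<le> s")
      case True
      have "2 / eps * (exponential_density eps s * s ^ 1) = 2 * s * exp (- eps * s)"
        using True eps by (simp add: exponential_density_def mult.commute)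
      then show ?thesis
        using True eps by (simp add: exponential_density_nonneg flip: ennreal_mult)
    qed (simp add: exponential_density_def)
    then show ?thesis
      by (simp flip: nn_integral_cmult)
  qed
  also have "\<dots> \<le> (\<integral>\<^sup>+ s. ennreal (2 * s) * indicator {0..} s * emeasure g {v. s \<le> \<bar>v\<bar>} \<partial>lborel)"
  proof (intro nn_integral_mono)
    fix s :: real
    show "ennreal (2 * s) * indicator {0..} s * ennreal (exp (- eps * s))
        \<le> ennreal (2 * s) * indicator {0..} s * emeasure g {v. s \<le> \<bar>v\<bar>}"
    proof (cases "s > 0")
      case True
      then show ?thesis
        using lipschitz_private_additive_tail_ge[OF g_prob g_sets priv True]
        by (intro mult_left_mono) (auto simp: emeasure_eq_measure)
    qed (simp add: ennreal_neg)
  qed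
  also have "\<dots> = (\<integral>\<^sup>+ v. ennreal (v\<^sup>2) \<partial>g)"
    by (rule nn_integral_square_eq_tail[symmetric]) (use g_sets in \<open>simp_all add: sigma_finite_measure\<close>)
  finally show ?thesis .
qed

theorem theorem1:
  fixes eps :: real and g :: "real measure"
  assumes eps: "eps > 0"
    and g_prob: "prob_space g" and g_sets: "sets g = sets borel"
    and priv: "lipschitz_private eps (additive_mech g)"
  shows "(\<integral>\<^sup>+ v. ennreal (v\<^sup>2) \<partial>g) \<ge> (\<integral>\<^sup>+ v. ennreal (v\<^sup>2) \<partial>laplace eps)
    \<and> (\<integral>\<^sup>+ v. ennreal (v\<^sup>2) \<partial>laplace eps) = ennreal (2 / eps\<^sup>2)
    \<and> prob_space (laplace eps)
    \<and> lipschitz_private eps (additive_mech (laplace eps))"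
  using lipschitz_private_additive_square_ge[OF eps g_prob g_sets priv]
  by (simp add: nn_integral_laplace_square prob_space_laplace lipschitz_private_laplace eps)

end
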